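(* Let $G=(V,E)$ be a graph with nonnegative edge lengths, root $r$, and integer demands $d_v>0$ on a set $\mathcal{D}$ of demand nodes, with total demand $D$. Fix $\epsilon>0$, $\alpha>1$, $\beta\ge\frac{\alpha+1}{\alpha-1}$, $\gamma>1$, $\delta>1$. Let $L\subseteq\{0,\dots,K\}$ and the cores $C_i$ ($i\in L$) be produced by Procedure 1 below, and let $T$ be produced by Procedure 2 below. Then $T$ is a tree and spans all demand nodes. Procedure 1: let $K=\lceil\log_{1+\epsilon}D\rceil$, $M_i=(1+\epsilon)^i$, $A_i(x)=\min\{x,M_i\}$; (1) for each $i=0,\dots,K$ let $T_i$ be a routing tree returned by a deterministic $\lambda$-approximation algorithm for SSRoB with cost function $A_i$; (2) for $i=1,\dots,K$ increasing, if $A_i(T_{i-1})<A_i(T_i)$ set $T_i\leftarrow T_{i-1}$; (3) for $i=K-1,\dots,0$ decreasing, if $A_i(T_{i+1})<A_i(T_i)$ set $T_i\leftarrow T_{i+1}$; (4) compute $C_i,B_i,R_i$ for each resulting $T_i$; (5) $L_B=\emptyset$, $B=\infty$; for $i=0,\dots,K$ increasing, if $B_i<B/\gamma$ add $i$ to $L_B$ and set $B\leftarrow B_i$; (6) $L=\emptyset$, $R=\infty$; for $i\in L_B$ decreasing, if $R_i<R/\delta$ add $i$ to $L$ and set $R\leftarrow R_i$. Procedure 2: set $T=\{r\}$; for each $i\in L$ in decreasing order, let $T'$ be an $(\alpha,\beta)$-LAST of the graph $(G/T)[C_i]$ rooted at the vertex obtained by contracting $T$, and set $T\leftarrow T\cup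 T'$.
   Context: A routing tree is a tree in $G$ containing $r$ and all demand nodes; each demand node $v$ sends $d_v$ units of flow to $r$ along its unique tree path, and $x_e$ is the total flow on edge $e$; $f(T)=\sum_{e\in T}l_ef(x_e)$. SSRoB with parameter $M$: find a routing tree minimizing $A(T)$ for $A(x)=\min\{x,M\}$; a $\lambda$-approximation returns a tree of cost at most $\lambda$ times optimal. For a routing tree $T_i$: rent cost $R_i=\sum_{e\in T_i,\,x_e<M_i} l_e A_i(x_e)$, normalized buy cost $B_i=\sum_{e\in T_i,\,x_e\ge M_i} l_e$, and the core $C_i$ consists of $r$ together with all vertices incident to edges $e\in T_i$ with $x_e\ge M_i$. $G/T$ denotes $G$ with the vertices of $T$ contracted to a single vertex, and $(G/T)[C_i]$ is its induced subgraph on $C_i$ (together with the contracted vertex); edges of $T'$ are identified with the corresponding edges of $G$. For $\alpha,\beta\ge1$, an $(\alpha,\beta)$-light approximate shortest-path tree ($(\alpha,\beta)$-LAST) of a graph $H$ with root $\rho$ is a spanning tree of $H$ in which every vertex's tree distance to $\rho$ is at most $\alpha$ times its shortest-path distance to $\rho$ in $H$, and whose total edge length is at most $\beta$ times the weight of a minimum spanning tree of $H$; such trees exist (and are efficiently computable) whenever $\alpha>1$ and $\beta\ge\frac{\alpha+1}{\alpha-1}$. *)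

theory Defs
  imports Complex_Main
begin

text \<open>An edge e has the (unordered) endpoints fst (en e) and snd (en e).
  Walks are given by a vertex list vs and an edge list es with length vs = length es + 1.\<close>

fun iswalk :: "'e set \<Rightarrow> ('e \<Rightarrow> 'v \<times> 'v) \<Rightarrow> 'v list \<Rightarrow> 'e list \<Rightarrow> bool" where
  "iswalk F en [u] [] = True"
| "iswalk F en (u # w # vs) (e # es) =
     (e \<in> F \<and> (en e = (u, w) \<or> en e = (w, u)) \<and> iswalk F en (w # vs) es)"
| "iswalk F en _ _ = False"

definition connected_on :: "('e \<Rightarrow> 'v \<times> 'v) \<Rightarrow> 'v set \<Rightarrow> 'e set \<Rightarrow> bool" where
  "connected_on en U F \<longleftrightarrow>
     (\<forall>u\<in>U. \<forall>v\<in>U. \<exists>vs es. iswalk F en vs es \<and> hd vs = u \<and> last vs = v)"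

definition has_cycle :: "('e \<Rightarrow> 'v \<times> 'v) \<Rightarrow> 'e set \<Rightarrow> bool" where
  "has_cycle en F \<longleftrightarrow>
     (\<exists>vs es. iswalk F en vs es \<and> es \<noteq> [] \<and> distinct es \<and> hd vs = last vs \<and> distinct (tl vs))"

definition is_tree :: "('e \<Rightarrow> 'v \<times> 'v) \<Rightarrow> 'v set \<Rightarrow> 'e set \<Rightarrow> bool" where
  "is_tree en U F \<longleftrightarrow> U \<noteq> {} \<and> (\<forall>e\<in>F. fst (en e) \<in> U \<and> snd (en e) \<in> U)
      \<and> connected_on en U F \<and> \<not> has_cycle en F"

definition gdist :: "('e \<Rightarrow> 'v \<times> 'v) \<Rightarrow> ('e \<Rightarrow> real) \<Rightarrow> 'e set \<Rightarrow> 'v \<Rightarrow> 'v \<Rightarrow> real" where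
  "gdist en l F u v =
     Inf {sum_list (map l es) | vs es. iswalk F en vs es \<and> hd vs = u \<and> last vs = v}"

definition mst_weight :: "('e \<Rightarrow> 'v \<times> 'v) \<Rightarrow> ('e \<Rightarrow> real) \<Rightarrow> 'v set \<Rightarrow> 'e set \<Rightarrow> real" where
  "mst_weight en l W FH = Inf {sum l F | F. F \<subseteq> FH \<and> is_tree en W F}"

definition is_LAST ::
  "real \<Rightarrow> real \<Rightarrow> ('e \<Rightarrow> 'v \<times> 'v) \<Rightarrow> ('e \<Rightarrow> real) \<Rightarrow> 'v set \<Rightarrow> 'e set \<Rightarrow> 'v \<Rightarrow> 'e set \<Rightarrow> bool" where
  "is_LAST \<alpha> \<beta> en l W FH \<rho> F' \<longleftrightarrow>
     F' \<subseteq> FH \<and> is_tree en W F'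
     \<and> (\<forall>v\<in>W. gdist en l F' \<rho> v \<le> \<alpha> * gdist en l FH \<rho> v)
     \<and> sum l F' \<le> \<beta> * mst_weight en l W FH"

record ('v, 'e) inst =
  gV :: "'v set"
  gE :: "'e set"
  gends :: "'e \<Rightarrow> 'v \<times> 'v"
  glen :: "'e \<Rightarrow> real"
  groot :: 'v
  gDem :: "'v set"
  gd :: "'v \<Rightarrow> nat"

definition valid_inst :: "('v, 'e) inst \<Rightarrow> bool" where
  "valid_inst G \<longleftrightarrow> finite (gV G) \<and> finite (gE G)
     \<and> (\<forall>e\<in>gE G. fst (gends G e) \<in> gV G \<and> snd (gends G e) \<in> gV G
                  \<and> fst (gends G e) \<noteq> snd (gends G e))
     \<and> (\<forall>e\<in>gE G. glen G e \<ge> 0)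
     \<and> groot G \<in> gV G \<and> gDem G \<subseteq> gV G \<and> gDem G \<noteq> {}
     \<and> (\<forall>v\<in>gDem G. gd G v > 0)"

definition total_demand :: "('v, 'e) inst \<Rightarrow> nat" where
  "total_demand G = (\<Sum>v\<in>gDem G. gd G v)"

definition tree_in :: "('v, 'e) inst \<Rightarrow> 'v set \<times> 'e set \<Rightarrow> bool" where
  "tree_in G T \<longleftrightarrow> fst T \<subseteq> gV G \<and> snd T \<subseteq> gE G \<and> is_tree (gends G) (fst T) (snd T)"

definition routing_tree :: "('v, 'e) inst \<Rightarrow> 'v set \<times> 'e set \<Rightarrow> bool" where
  "routing_tree G T \<longleftrightarrow> tree_in G T \<and> groot G \<in> fst T \<and> gDem G \<subseteq> fst T"

definition flow :: "('v, 'e) inst \<Rightarrow> 'v set \<times> 'e set \<Rightarrow> 'e \<Rightarrow> real" where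
  "flow G T e = (\<Sum>v\<in>gDem G.
      if (\<exists>vs es. iswalk (snd T) (gends G) vs es \<and> hd vs = v \<and> last vs = groot G
                  \<and> distinct vs \<and> e \<in> set es)
      then real (gd G v) else 0)"

definition costA :: "('v, 'e) inst \<Rightarrow> real \<Rightarrow> 'v set \<times> 'e set \<Rightarrow> real" where
  "costA G M T = (\<Sum>e\<in>snd T. glen G e * min (flow G T e) M)"

definition rent_cost :: "('v, 'e) inst \<Rightarrow> real \<Rightarrow> 'v set \<times> 'e set \<Rightarrow> real" where
  "rent_cost G M T = (\<Sum>e\<in>{e\<in>snd T. flow G T e < M}. glen G e * min (flow G T e) M)"

definition buy_cost :: "('v, 'e) inst \<Rightarrow> real \<Rightarrow> 'v set \<times> 'e set \<Rightarrow> real" where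
  "buy_cost G M T = (\<Sum>e\<in>{e\<in>snd T. flow G T e \<ge> M}. glen G e)"

definition core :: "('v, 'e) inst \<Rightarrow> real \<Rightarrow> 'v set \<times> 'e set \<Rightarrow> 'v set" where
  "core G M T = {groot G} \<union>
     {v. \<exists>e\<in>snd T. flow G T e \<ge> M \<and> (v = fst (gends G e) \<or> v = snd (gends G e))}"

definition Kpar :: "real \<Rightarrow> ('v, 'e) inst \<Rightarrow> nat" where
  "Kpar \<epsilon> G = nat \<lceil>log (1 + \<epsilon>) (real (total_demand G))\<rceil>"

definition Mpar :: "real \<Rightarrow> nat \<Rightarrow> real" where
  "Mpar \<epsilon> i = (1 + \<epsilon>) ^ i"

text \<open>Step (2): for i = 1..K increasing, replace T_i by (the updated) T_{i-1} if strictly cheaper.\<close>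
fun step2 :: "(nat \<Rightarrow> 't \<Rightarrow> real) \<Rightarrow> (nat \<Rightarrow> 't) \<Rightarrow> nat \<Rightarrow> 't" where
  "step2 c T 0 = T 0"
| "step2 c T (Suc i) = (let P = step2 c T i in if c (Suc i) P < c (Suc i) (T (Suc i)) then P else T (Suc i))"

text \<open>Step (3): for i = K-1..0 decreasing; step3 c T K j is the final tree with index K - j.\<close>
fun step3 :: "(nat \<Rightarrow> 't \<Rightarrow> real) \<Rightarrow> (nat \<Rightarrow> 't) \<Rightarrow> nat \<Rightarrow> nat \<Rightarrow> 't" where
  "step3 c T K 0 = T K"
| "step3 c T K (Suc j) = (let i = K - Suc j; P = step3 c T K j in
                           if c i P < c i (T i) then P else T i)"

text \<open>Steps (5)/(6): scan indices in the given order, keep i if its value is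
  smaller than the current threshold divided by the factor (None = infinity).\<close>
fun scan :: "real \<Rightarrow> (nat \<Rightarrow> real) \<Rightarrow> nat list \<Rightarrow> real option \<Rightarrow> nat list" where
  "scan g b [] B = []"
| "scan g b (i # is) B =
     (if (case B of None \<Rightarrow> True | Some B' \<Rightarrow> b i < B' / g)
      then i # scan g b is (Some (b i)) else scan g b is B)"

text \<open>The trees after steps (1)-(3), given the trees Tsel i from step (1).\<close>
definition final_trees :: "real \<Rightarrow> ('v, 'e) inst \<Rightarrow> (nat \<Rightarrow> 'v set \<times> 'e set) \<Rightarrow> nat \<Rightarrow> 'v set \<times> 'e set" where
  "final_trees \<epsilon> G Tsel i =
     (let c = (\<lambda>j T. costA G (Mpar \<epsilon> j) T); K = Kpar \<epsilon> G
      in step3 c (step2 c Tsel) K (K - i))"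

text \<open>The list L (in decreasing order) produced by Procedure 1.\<close>
definition proc1_L :: "real \<Rightarrow> real \<Rightarrow> real \<Rightarrow> ('v, 'e) inst \<Rightarrow> (nat \<Rightarrow> 'v set \<times> 'e set) \<Rightarrow> nat list" where
  "proc1_L \<epsilon> \<gamma> \<delta> G Tsel =
     (let T = final_trees \<epsilon> G Tsel; K = Kpar \<epsilon> G;
          LB = scan \<gamma> (\<lambda>i. buy_cost G (Mpar \<epsilon> i) (T i)) [0..<Suc K] None
      in scan \<delta> (\<lambda>i. rent_cost G (Mpar \<epsilon> i) (T i)) (rev LB) None)"

definition proc1_core :: "real \<Rightarrow> ('v, 'e) inst \<Rightarrow> (nat \<Rightarrow> 'v set \<times> 'e set) \<Rightarrow> nat \<Rightarrow> 'v set" where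
  "proc1_core \<epsilon> G Tsel i = core G (Mpar \<epsilon> i) (final_trees \<epsilon> G Tsel i)"

text \<open>Contraction of the vertex set U (containing the root) into the root vertex.\<close>
definition cmap :: "'v set \<Rightarrow> 'v \<Rightarrow> 'v \<Rightarrow> 'v" where
  "cmap U r v = (if v \<in> U then r else v)"

definition contr_ends :: "('v, 'e) inst \<Rightarrow> 'v set \<Rightarrow> 'e \<Rightarrow> 'v \<times> 'v" where
  "contr_ends G U e = (cmap U (groot G) (fst (gends G e)), cmap U (groot G) (snd (gends G e)))"

text \<open>Vertices of (G/T)[C]: the vertices of C outside T, plus the contracted vertex.\<close>
definition contr_verts :: "('v, 'e) inst \<Rightarrow> 'v set \<Rightarrow> 'v set \<Rightarrow> 'v set" where
  "contr_verts G U C = (C - U) \<union> {groot G}"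

text \<open>Edges of (G/T)[C]: edges of G/T (edges not inside T) with both ends in the vertex set.\<close>
definition contr_edges :: "('v, 'e) inst \<Rightarrow> 'v set \<Rightarrow> 'v set \<Rightarrow> 'e set" where
  "contr_edges G U C = {e \<in> gE G. fst (contr_ends G U e) \<in> contr_verts G U C
       \<and> snd (contr_ends G U e) \<in> contr_verts G U C
       \<and> fst (contr_ends G U e) \<noteq> snd (contr_ends G U e)}"

text \<open>proc2 \<alpha> \<beta> G Cs T T'': starting from tree T and processing cores Cs in order,
  with some admissible choice of LASTs, the procedure ends with T''.\<close>
fun proc2 :: "real \<Rightarrow> real \<Rightarrow> ('v, 'e) inst \<Rightarrow> 'v set list \<Rightarrow> 'v set \<times> 'e set \<Rightarrow> 'v set \<times> 'e set \<Rightarrow> bool" where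
  "proc2 \<alpha> \<beta> G [] T Res \<longleftrightarrow> Res = T"
| "proc2 \<alpha> \<beta> G (C # Cs) T Res \<longleftrightarrow>
     (\<exists>F'. is_LAST \<alpha> \<beta> (contr_ends G (fst T)) (glen G)
              (contr_verts G (fst T) C) (contr_edges G (fst T) C) (groot G) F'
          \<and> proc2 \<alpha> \<beta> G Cs (fst T \<union> C, snd T \<union> F') Res)"

end

theory Submission
  imports Defs
begin

text \<open>Procedure 2 only ever adds to the current tree T a tree T' of the graph in which T is
  contracted to the root. Such a union is again a tree: walks of T' lift to G through the
  connected T, and contraction turns the edges of T into loops, so a cycle of the union would
  leave a closed trail in T'. It remains to see that the core C_0 is processed, since flows are
  integral and every demand node sends at least one unit over the first edge of its path, so
  C_0 contains all demand nodes. The buy-cost scan keeps index 0 first, and every later index i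
  it keeps has B_i < B_{i-1}. That forces R_i > 0: if T_i rents nothing, then
  M_{i-1} B_{i-1} \<le> A_{i-1}(T_{i-1}) \<le> A_{i-1}(T_i) \<le> M_{i-1} B_i by step (3).
  As R_0 = 0, the rent scan, which ends at index 0, selects it.\<close>

section \<open>Walks\<close>

lemma iswalk_length: "iswalk F en vs es \<Longrightarrow> length vs = Suc (length es)"
  by (induction F en vs es rule: iswalk.induct) auto

lemma iswalk_nonempty: "iswalk F en vs es \<Longrightarrow> vs \<noteq> []"
  using iswalk_length by fastforce

lemma iswalk_edges: "iswalk F en vs es \<Longrightarrow> set es \<subseteq> F"
  by (induction F en vs es rule: iswalk.induct) auto

lemma iswalk_edges_subset: "iswalk F en vs es \<Longrightarrow> set es \<subseteq> F' \<Longrightarrow> iswalk F' en vs es"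
  by (induction F en vs es rule: iswalk.induct) auto

lemma iswalk_mono: "iswalk F en vs es \<Longrightarrow> F \<subseteq> F' \<Longrightarrow> iswalk F' en vs es"
  by (metis iswalk_edges iswalk_edges_subset subset_trans)

lemma iswalk_append:
  "iswalk F en vs es \<Longrightarrow> iswalk F en ws fs \<Longrightarrow> last vs = hd ws \<Longrightarrow> iswalk F en (vs @ tl ws) (es @ fs)"
proof (induction F en vs es rule: iswalk.induct)
  case (1 F en u)
  then show ?case using iswalk_nonempty[OF 1(1)] by (cases ws) auto
qed auto

lemma iswalk_rev: "iswalk F en vs es \<Longrightarrow> iswalk F en (rev vs) (rev es)"
proof (induction F en vs es rule: iswalk.induct)
  case (2 F en u w vs e es)
  then have "iswalk F en (rev (w # vs)) (rev es)" "iswalk F en [w, u] [e]" by auto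
  from iswalk_append[OF this] show ?case by simp
qed auto

lemma iswalk_drop: "iswalk F en vs es \<Longrightarrow> i < length vs \<Longrightarrow> iswalk F en (drop i vs) (drop i es)"
proof (induction F en vs es arbitrary: i rule: iswalk.induct)
  case (2 F en u w vs e es)
  then show ?case by (cases i) auto
qed auto

lemma iswalk_take: "iswalk F en vs es \<Longrightarrow> k < length vs \<Longrightarrow> iswalk F en (take (Suc k) vs) (take k es)"
proof (induction F en vs es arbitrary: k rule: iswalk.induct)
  case (2 F en u w vs e es)
  then show ?case by (cases k) auto
qed auto

definition reachable :: "('e \<Rightarrow> 'v \<times> 'v) \<Rightarrow> 'e set \<Rightarrow> 'v \<Rightarrow> 'v \<Rightarrow> bool" where
  "reachable en F u v \<longleftrightarrow> (\<exists>vs es. iswalk F en vs es \<and> hd vs = u \<and> last vs = v)"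

lemma connected_on_iff_reachable: "connected_on en U F \<longleftrightarrow> (\<forall>u\<in>U. \<forall>v\<in>U. reachable en F u v)"
  unfolding connected_on_def reachable_def ..

lemma reachable_refl: "reachable en F u u"
  unfolding reachable_def by (intro exI[of _ "[u]"] exI[of _ "[]"]) simp

lemma reachable_edge: "e \<in> F \<Longrightarrow> en e = (u, v) \<or> en e = (v, u) \<Longrightarrow> reachable en F u v"
  unfolding reachable_def by (intro exI[of _ "[u, v]"] exI[of _ "[e]"]) auto

lemma reachable_trans: "reachable en F u v \<Longrightarrow> reachable en F v w \<Longrightarrow> reachable en F u w"
proof -
  assume "reachable en F u v" "reachable en F v w"
  then obtain vs es ws fs where vs: "iswalk F en vs es" "hd vs = u" "last vs = v"
    and ws: "iswalk F en ws fs" "hd ws = v" "last ws = w"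
    unfolding reachable_def by blast
  have "iswalk F en (vs @ tl ws) (es @ fs)"
    using iswalk_append[OF vs(1) ws(1)] vs(3) ws(2) by simp
  moreover have "hd (vs @ tl ws) = u" using vs iswalk_nonempty[OF vs(1)] by simp
  moreover have "last (vs @ tl ws) = w"
    using vs ws iswalk_nonempty[OF ws(1)] by (cases ws) auto
  ultimately show ?thesis
    unfolding reachable_def by (intro exI[of _ "vs @ tl ws"] exI[of _ "es @ fs"]) simp
qed

lemma reachable_sym: "reachable en F u v \<Longrightarrow> reachable en F v u"
proof -
  assume "reachable en F u v"
  then obtain vs es where vs: "iswalk F en vs es" "hd vs = u" "last vs = v"
    unfolding reachable_def by blast
  moreover have "vs \<noteq> []" using iswalk_nonempty[OF vs(1)] .
  ultimately show ?thesis
    unfolding reachable_def using iswalk_rev[OF vs(1)] by (auto simp: hd_rev last_rev)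
qed

lemma reachable_mono: "reachable en F u v \<Longrightarrow> F \<subseteq> F' \<Longrightarrow> reachable en F' u v"
  unfolding reachable_def using iswalk_mono by blast

lemma iswalk_path:
  "iswalk F en vs es \<Longrightarrow>
    \<exists>vs' es'. iswalk F en vs' es' \<and> hd vs' = hd vs \<and> last vs' = last vs \<and> distinct vs'"
proof (induction F en vs es rule: iswalk.induct)
  case (1 F en u)
  then show ?case by (intro exI[of _ "[u]"] exI[of _ "[]"]) auto
next
  case (2 F en u w vs e es)
  then obtain p ps where p: "iswalk F en p ps" "hd p = w" "last p = last (w # vs)" "distinct p"
    by auto
  then obtain rest where pw: "p = w # rest" using iswalk_nonempty by (cases p) auto
  show ?case
  proof (cases "u \<in> set p")
    case False
    with 2 p pw show ?thesis by (intro exI[of _ "u # p"] exI[of _ "e # ps"]) auto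
  next
    case True
    then obtain i where i: "i < length p" "p ! i = u" by (meson in_set_conv_nth)
    with p show ?thesis
      by (intro exI[of _ "drop i p"] exI[of _ "drop i ps"]) (auto simp: iswalk_drop hd_drop_conv_nth)
  qed
qed auto

lemma reachable_path:
  "reachable en F u v \<Longrightarrow> \<exists>vs es. iswalk F en vs es \<and> hd vs = u \<and> last vs = v \<and> distinct vs"
  unfolding reachable_def using iswalk_path by fastforce

lemma closed_trail_has_cycle:
  "iswalk F en vs es \<Longrightarrow> es \<noteq> [] \<Longrightarrow> distinct es \<Longrightarrow> hd vs = last vs \<Longrightarrow> has_cycle en F"
proof (induction "length es" arbitrary: vs es rule: less_induct)
  case less
  show ?case
  proof (cases "distinct (tl vs)")
    case True
    then show ?thesis using less.prems unfolding has_cycle_def by blast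
  next
    case False
    have lv: "length vs = Suc (length es)" using iswalk_length[OF less.prems(1)] .
    from False obtain i j where ij: "i < length (tl vs)" "j < length (tl vs)" "i \<noteq> j" "tl vs ! i = tl vs ! j"
      unfolding distinct_conv_nth by blast
    then obtain a c where ac: "a < c" "c < length es" "vs ! Suc a = vs ! Suc c"
      using lv by (cases "i < j") (auto simp: nth_tl intro: that[of i j] that[of j i])
    \<comment> \<open>the repeated vertex cuts out a shorter closed trail\<close>
    define ws where "ws = take (Suc (c - a)) (drop (Suc a) vs)"
    define fs where "fs = take (c - a) (drop (Suc a) es)"
    have "iswalk F en (drop (Suc a) vs) (drop (Suc a) es)"
      using iswalk_drop[OF less.prems(1)] ac lv by simp
    from iswalk_take[OF this, of "c - a"] have w: "iswalk F en ws fs"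
      unfolding ws_def fs_def using ac lv by simp
    have "hd ws = vs ! Suc a" "last ws = vs ! Suc c"
      unfolding ws_def using ac lv by (simp_all add: hd_conv_nth last_conv_nth)
    then have "hd ws = last ws" using ac by simp
    moreover have "distinct fs" unfolding fs_def using less.prems(3) by (simp add: distinct_take)
    moreover have "fs \<noteq> []" "length fs < length es" unfolding fs_def using ac by auto
    ultimately show ?thesis using less.hyps w by blast
  qed
qed

section \<open>Contracting a tree into the root\<close>

definition contract_ends :: "'v set \<Rightarrow> 'v \<Rightarrow> ('e \<Rightarrow> 'v \<times> 'v) \<Rightarrow> 'e \<Rightarrow> 'v \<times> 'v" where
  "contract_ends U r en e = (cmap U r (fst (en e)), cmap U r (snd (en e)))"

lemma contr_ends_eq_contract_ends: "contr_ends G U = contract_ends U (groot G) (gends G)"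
  by (simp add: fun_eq_iff contr_ends_def contract_ends_def)

lemma iswalk_map: "iswalk F en vs es \<Longrightarrow> iswalk F (\<lambda>e. (f (fst (en e)), f (snd (en e)))) (map f vs) es"
  by (induction F en vs es rule: iswalk.induct) auto

lemma iswalk_filter_loops:
  "iswalk F en vs es \<Longrightarrow> \<forall>e\<in>F - S. fst (en e) = snd (en e) \<Longrightarrow>
    \<exists>vs'. iswalk S en vs' (filter (\<lambda>e. e \<in> S) es) \<and> hd vs' = hd vs \<and> last vs' = last vs"
proof (induction F en vs es rule: iswalk.induct)
  case (1 F en u)
  then show ?case by (intro exI[of _ "[u]"]) auto
next
  case (2 F en u w vs e es)
  then obtain vs' where v: "iswalk S en vs' (filter (\<lambda>e. e \<in> S) es)" "hd vs' = w" "last vs' = last (w # vs)"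
    by auto
  then obtain rest where vw: "vs' = w # rest" using iswalk_nonempty by (cases vs') auto
  show ?case
  proof (cases "e \<in> S")
    case True
    with v vw "2.prems"(1) show ?thesis by (intro exI[of _ "u # vs'"]) auto
  next
    case False
    have "e \<in> F" "en e = (u, w) \<or> en e = (w, u)" using "2.prems"(1) by auto
    moreover from this(1) have "fst (en e) = snd (en e)" using "2.prems"(2) False by blast
    ultimately have "u = w" by auto
    with v False show ?thesis by (intro exI[of _ vs']) auto
  qed
qed auto

lemma reachable_of_cmap_eq:
  assumes "connected_on en U F" "r \<in> U" "cmap U r a = cmap U r p"
  shows "reachable en F a p"
proof (cases "a \<in> U")
  case True
  with assms have "p \<in> U" by (auto simp: cmap_def split: if_splits)
  with True assms(1) show ?thesis by (simp add: connected_on_iff_reachable)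
next
  case False
  with assms have "a = p" by (auto simp: cmap_def split: if_splits)
  then show ?thesis by (simp add: reachable_refl)
qed

lemma reachable_lift_contracted:
  assumes "reachable (contract_ends U r en) F' x y" "connected_on en U F" "r \<in> U" "cmap U r a = x"
  shows "\<exists>b. reachable en (F \<union> F') a b \<and> cmap U r b = y"
proof -
  obtain ws es where "iswalk F' (contract_ends U r en) ws es" "hd ws = x" "last ws = y"
    using assms(1) unfolding reachable_def by blast
  with assms(4) show ?thesis
  proof (induction F' "contract_ends U r en" ws es arbitrary: a x rule: iswalk.induct)
    case (1 F' u)
    then show ?case by (intro exI[of _ a]) (auto simp: reachable_refl)
  next
    case (2 F' u w ws e es)
    then have "contract_ends U r en e = (u, w) \<or> contract_ends U r en e = (w, u)" by simp
    then obtain p q where pq: "en e = (p, q) \<or> en e = (q, p)" "cmap U r p = u" "cmap U r q = w"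
      by (cases "en e") (auto simp: contract_ends_def)
    obtain b where b: "reachable en (F \<union> F') q b" "cmap U r b = y"
      using "2.hyps" "2.prems" pq(3) by auto
    have "cmap U r a = cmap U r p" using "2.prems" pq(2) by simp
    then have "reachable en F a p" by (rule reachable_of_cmap_eq[OF assms(2,3)])
    then have "reachable en (F \<union> F') a p" by (rule reachable_mono) simp
    moreover have "reachable en (F \<union> F') p q" using "2.prems" pq(1) by (intro reachable_edge) auto
    ultimately have "reachable en (F \<union> F') a b" using b(1) by (meson reachable_trans)
    with b(2) show ?case by blast
  qed auto
qed

lemma connected_on_union_contracted:
  assumes con: "connected_on en U F" and rU: "r \<in> U"
    and con': "connected_on (contract_ends U r en) ((C - U) \<union> {r}) F'"
  shows "connected_on en (U \<union> C) (F \<union> F')"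
proof -
  have to_root: "reachable en (F \<union> F') x r" if "x \<in> U \<union> C" for x
  proof (cases "x \<in> U")
    case True
    with con rU have "reachable en F x r" by (simp add: connected_on_iff_reachable)
    then show ?thesis by (rule reachable_mono) simp
  next
    case False
    with that con' have "reachable (contract_ends U r en) F' x r"
      by (simp add: connected_on_iff_reachable)
    moreover have "cmap U r x = x" using False by (simp add: cmap_def)
    ultimately obtain b where b: "reachable en (F \<union> F') x b" "cmap U r b = r"
      using reachable_lift_contracted[OF _ con rU] by blast
    have "b \<in> U" using b(2) rU by (auto simp: cmap_def split: if_splits)
    with con rU have "reachable en F b r" by (simp add: connected_on_iff_reachable)
    then have "reachable en (F \<union> F') b r" by (rule reachable_mono) simp
    with b(1) show ?thesis by (rule reachable_trans)
  qed
  show ?thesis unfolding connected_on_iff_reachable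
    using to_root reachable_sym reachable_trans by metis
qed

lemma acyclic_union_contracted:
  assumes ends: "\<forall>e\<in>F. fst (en e) \<in> U \<and> snd (en e) \<in> U"
    and acyc: "\<not> has_cycle en F" and acyc': "\<not> has_cycle (contract_ends U r en) F'"
  shows "\<not> has_cycle en (F \<union> F')"
proof
  assume "has_cycle en (F \<union> F')"
  then obtain vs es where c: "iswalk (F \<union> F') en vs es" "es \<noteq> []" "distinct es" "hd vs = last vs"
    "distinct (tl vs)"
    unfolding has_cycle_def by blast
  show False
  proof (cases "set es \<subseteq> F")
    case True
    with c acyc show False unfolding has_cycle_def using iswalk_edges_subset by blast
  next
    case False
    have "iswalk (F \<union> F') (contract_ends U r en) (map (cmap U r) vs) es"
      using iswalk_map[OF c(1)] unfolding contract_ends_def .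
    moreover have "\<forall>e\<in>(F \<union> F') - F'. fst (contract_ends U r en e) = snd (contract_ends U r en e)"
      using ends by (auto simp: contract_ends_def cmap_def)
    ultimately obtain ws where
      w: "iswalk F' (contract_ends U r en) ws (filter (\<lambda>e. e \<in> F') es)"
         "hd ws = hd (map (cmap U r) vs)" "last ws = last (map (cmap U r) vs)"
      using iswalk_filter_loops by blast
    have "vs \<noteq> []" using iswalk_nonempty[OF c(1)] .
    then have "hd ws = last ws" using w(2,3) c(4) by (simp add: hd_map last_map)
    moreover have "filter (\<lambda>e. e \<in> F') es \<noteq> []"
      using False iswalk_edges[OF c(1)] by (auto simp: filter_empty_conv)
    moreover have "distinct (filter (\<lambda>e. e \<in> F') es)" using c(3) by simp
    ultimately show False using closed_trail_has_cycle[OF w(1)] acyc' by blast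
  qed
qed

lemma is_tree_union_contracted:
  assumes "is_tree en U F" "r \<in> U" "is_tree (contract_ends U r en) ((C - U) \<union> {r}) F'"
  shows "is_tree en (U \<union> C) (F \<union> F')"
proof -
  have "\<forall>e\<in>F'. fst (en e) \<in> U \<union> C \<and> snd (en e) \<in> U \<union> C"
    using assms(2,3) unfolding is_tree_def contract_ends_def by (auto simp: cmap_def split: if_splits)
  moreover have "connected_on en (U \<union> C) (F \<union> F')"
    using assms connected_on_union_contracted unfolding is_tree_def by metis
  moreover have "\<not> has_cycle en (F \<union> F')"
    using assms acyclic_union_contracted unfolding is_tree_def by metis
  ultimately show ?thesis using assms(1) unfolding is_tree_def by auto
qed

lemma tree_in_root: "groot G \<in> gV G \<Longrightarrow> tree_in G ({groot G}, {})"
  unfolding tree_in_def is_tree_def has_cycle_def connected_on_iff_reachable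
  by (auto simp: reachable_refl dest: iswalk_edges)

lemma proc2_tree_in:
  assumes "proc2 \<alpha> \<beta> G Cs T Res" "tree_in G T" "groot G \<in> fst T" "\<forall>C\<in>set Cs. C \<subseteq> gV G"
  shows "tree_in G Res \<and> fst T \<union> \<Union>(set Cs) \<subseteq> fst Res"
  using assms
proof (induction Cs arbitrary: T)
  case (Cons C Cs)
  obtain F' where F': "is_LAST \<alpha> \<beta> (contr_ends G (fst T)) (glen G)
      (contr_verts G (fst T) C) (contr_edges G (fst T) C) (groot G) F'"
    "proc2 \<alpha> \<beta> G Cs (fst T \<union> C, snd T \<union> F') Res"
    using Cons.prems(1) by auto
  have "F' \<subseteq> gE G" "is_tree (contract_ends (fst T) (groot G) (gends G)) ((C - fst T) \<union> {groot G}) F'"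
    using F'(1) unfolding is_LAST_def contr_edges_def contr_verts_def contr_ends_eq_contract_ends by auto
  moreover have "is_tree (gends G) (fst T) (snd T)" using Cons.prems(2) unfolding tree_in_def by simp
  ultimately have "is_tree (gends G) (fst T \<union> C) (snd T \<union> F')"
    using is_tree_union_contracted Cons.prems(3) by metis
  with Cons.prems(2,4) \<open>F' \<subseteq> gE G\<close> have "tree_in G (fst T \<union> C, snd T \<union> F')"
    unfolding tree_in_def by auto
  with Cons.IH[OF F'(2)] Cons.prems(3,4) show ?case by auto
qed simp

section \<open>Costs of routing trees and Procedure 1\<close>

lemma routing_tree_edges:
  assumes "valid_inst G" "routing_tree G T"
  shows "finite (snd T)" "snd T \<subseteq> gE G" "\<forall>e\<in>snd T. glen G e \<ge> 0"
  using assms unfolding valid_inst_def routing_tree_def tree_in_def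
  by (auto intro: finite_subset)

lemma flow_nonneg: "flow G T e \<ge> 0"
  unfolding flow_def by (rule sum_nonneg) simp

lemma flow_of_nat: "\<exists>n::nat. flow G T e = real n"
proof -
  have "flow G T e = real (\<Sum>v\<in>gDem G. if \<exists>vs es. iswalk (snd T) (gends G) vs es \<and> hd vs = v
      \<and> last vs = groot G \<and> distinct vs \<and> e \<in> set es then gd G v else 0)"
    unfolding flow_def of_nat_sum by (rule sum.cong) auto
  then show ?thesis by blast
qed

lemma demand_le_flow:
  assumes "valid_inst G" "v \<in> gDem G" "iswalk (snd T) (gends G) vs es" "hd vs = v" "last vs = groot G"
    "distinct vs" "e \<in> set es"
  shows "real (gd G v) \<le> flow G T e"
proof -
  have "finite (gDem G)" using assms(1) unfolding valid_inst_def by (auto intro: finite_subset)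
  have "real (gd G v) = (if \<exists>vs es. iswalk (snd T) (gends G) vs es \<and> hd vs = v
      \<and> last vs = groot G \<and> distinct vs \<and> e \<in> set es then real (gd G v) else 0)"
    using assms(3-7) by auto
  also have "\<dots> \<le> flow G T e"
    unfolding flow_def by (rule member_le_sum[OF assms(2) _ \<open>finite (gDem G)\<close>]) simp
  finally show ?thesis .
qed

lemma buy_cost_le_costA:
  assumes "valid_inst G" "routing_tree G T" "M > 0"
  shows "M * buy_cost G M T \<le> costA G M T"
proof -
  have "M * buy_cost G M T = (\<Sum>e\<in>{e\<in>snd T. flow G T e \<ge> M}. glen G e * min (flow G T e) M)"
    unfolding buy_cost_def sum_distrib_left by (rule sum.cong) auto
  also have "\<dots> \<le> costA G M T" unfolding costA_def
    using routing_tree_edges[OF assms(1,2)] assms(3) flow_nonneg[of G T]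
    by (intro sum_mono2) auto
  finally show ?thesis .
qed

lemma rent_cost_nonneg:
  assumes "valid_inst G" "routing_tree G T" "M > 0"
  shows "rent_cost G M T \<ge> 0"
  unfolding rent_cost_def using routing_tree_edges[OF assms(1,2)] assms(3) flow_nonneg[of G T]
  by (intro sum_nonneg) auto

lemma buy_cost_nonneg:
  assumes "valid_inst G" "routing_tree G T"
  shows "buy_cost G M T \<ge> 0"
  unfolding buy_cost_def using routing_tree_edges(3)[OF assms] by (auto intro!: sum_nonneg)

lemma costA_le_buy_cost_if_rent_cost_zero:
  assumes "valid_inst G" "routing_tree G T" "rent_cost G M T = 0" "0 < M'" "M' \<le> M"
  shows "costA G M' T \<le> M' * buy_cost G M T"
proof -
  note edges = routing_tree_edges[OF assms(1,2)]
  define S where "S = {e\<in>snd T. flow G T e \<ge> M}"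
  define S' where "S' = {e\<in>snd T. flow G T e < M}"
  have "snd T = S \<union> S'" "S \<inter> S' = {}" "finite S" "finite S'"
    unfolding S_def S'_def using edges by auto
  then have "costA G M' T = (\<Sum>e\<in>S. glen G e * min (flow G T e) M') + (\<Sum>e\<in>S'. glen G e * min (flow G T e) M')"
    unfolding costA_def by (simp add: sum.union_disjoint)
  also have "(\<Sum>e\<in>S. glen G e * min (flow G T e) M') \<le> (\<Sum>e\<in>S. glen G e * M')"
    using edges unfolding S_def by (intro sum_mono mult_left_mono) auto
  also have "(\<Sum>e\<in>S'. glen G e * min (flow G T e) M') \<le> (\<Sum>e\<in>S'. glen G e * min (flow G T e) M)"
    using edges unfolding S'_def by (intro sum_mono mult_left_mono) auto
  also have "\<dots> = 0" using assms(3) unfolding rent_cost_def S'_def .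
  finally show ?thesis unfolding buy_cost_def S_def by (simp add: sum_distrib_left mult.commute)
qed

lemma rent_cost_one: "rent_cost G 1 T = 0"
  unfolding rent_cost_def
proof (rule sum.neutral, rule ballI)
  fix e assume "e \<in> {e \<in> snd T. flow G T e < 1}"
  moreover obtain n where "flow G T e = real n" using flow_of_nat[of G T e] by blast
  ultimately have "flow G T e = 0" by simp
  then show "glen G e * min (flow G T e) 1 = 0" by simp
qed

lemma core_subset:
  assumes "valid_inst G" "routing_tree G T"
  shows "core G M T \<subseteq> gV G"
  using assms routing_tree_edges(2)[OF assms] unfolding core_def valid_inst_def by auto

lemma demands_subset_core_one:
  assumes "valid_inst G" "routing_tree G T"
  shows "gDem G \<subseteq> core G 1 T"
proof
  fix v assume v: "v \<in> gDem G"
  show "v \<in> core G 1 T"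
  proof (cases "v = groot G")
    case True
    then show ?thesis unfolding core_def by simp
  next
    case False
    have "connected_on (gends G) (fst T) (snd T)" "v \<in> fst T" "groot G \<in> fst T"
      using assms(2) v unfolding routing_tree_def tree_in_def is_tree_def by auto
    then obtain vs es where p: "iswalk (snd T) (gends G) vs es" "hd vs = v" "last vs = groot G" "distinct vs"
      using reachable_path unfolding connected_on_iff_reachable by metis
    then obtain w rest where vs: "vs = v # w # rest"
      using False iswalk_nonempty[OF p(1)] by (cases vs rule: remdups_adj.cases) auto
    then obtain e es' where es: "es = e # es'" using iswalk_length[OF p(1)] by (cases es) auto
    have "real (gd G v) \<le> flow G T e" using demand_le_flow[OF assms(1) v p] es by simp
    moreover have "gd G v > 0" using assms(1) v unfolding valid_inst_def by auto
    moreover have "e \<in> snd T" "gends G e = (v, w) \<or> gends G e = (w, v)" using p(1) vs es by auto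
    ultimately show ?thesis unfolding core_def by force
  qed
qed

lemma step2_in_range: "i \<le> K \<Longrightarrow> step2 c T i \<in> T ` {..K}"
  by (induction i) (auto simp: Let_def)

lemma step3_in: "\<forall>j\<le>K. T j \<in> S \<Longrightarrow> step3 c T K j \<in> S"
  by (induction j) (auto simp: Let_def)

lemma final_trees_in_range: "final_trees \<epsilon> G Tsel i \<in> Tsel ` {..Kpar \<epsilon> G}"
  unfolding final_trees_def Let_def
  by (rule step3_in) (simp add: step2_in_range)

lemma costA_final_trees_le_Suc:
  assumes "i < Kpar \<epsilon> G"
  shows "costA G (Mpar \<epsilon> i) (final_trees \<epsilon> G Tsel i) \<le> costA G (Mpar \<epsilon> i) (final_trees \<epsilon> G Tsel (Suc i))"
proof -
  define K where "K = Kpar \<epsilon> G"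
  define c where "c = (\<lambda>j T. costA G (Mpar \<epsilon> j) T)"
  have ki: "K - i = Suc (K - Suc i)" "K - Suc (K - Suc i) = i" using assms K_def by auto
  have "final_trees \<epsilon> G Tsel i = step3 c (step2 c Tsel) K (Suc (K - Suc i))"
    unfolding final_trees_def c_def K_def Let_def using ki K_def by simp
  also have "\<dots> = (if c i (final_trees \<epsilon> G Tsel (Suc i)) < c i (step2 c Tsel i)
      then final_trees \<epsilon> G Tsel (Suc i) else step2 c Tsel i)"
    unfolding final_trees_def c_def K_def Let_def using ki K_def by simp
  finally show ?thesis unfolding c_def by auto
qed

lemma set_scan_subset: "set (scan g b xs B) \<subseteq> set xs"
  by (induction xs arbitrary: B) (auto split: option.splits)

lemma scan_upt_Some_decreasing:
  assumes "g > 1" "\<forall>i. b i \<ge> 0"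
  shows "0 < m \<Longrightarrow> B \<ge> 0 \<Longrightarrow> B / g \<le> b (m - 1) \<Longrightarrow>
    \<forall>i\<in>set (scan g b [m..<m + d] (Some B)). b i < b (i - 1)"
proof (induction d arbitrary: m B)
  case (Suc d)
  have upt: "[m..<m + Suc d] = m # [Suc m..<Suc m + d]" by (simp add: upt_conv_Cons)
  show ?case
  proof (cases "b m < B / g")
    case True
    have "b m \<ge> 0" using assms(2) by blast
    then have "b m / g \<le> b m" using assms(1) by (simp add: divide_le_eq mult_le_cancel_left1)
    then have "\<forall>i\<in>set (scan g b [Suc m..<Suc m + d] (Some (b m))). b i < b (i - 1)"
      using Suc.IH[of "Suc m" "b m"] assms(2) by simp
    then show ?thesis using True Suc.prems upt by auto
  next
    case False
    then have "\<forall>i\<in>set (scan g b [Suc m..<Suc m + d] (Some B)). b i < b (i - 1)"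
      using Suc.IH[of "Suc m" B] Suc.prems by simp
    then show ?thesis using False upt by auto
  qed
qed simp

lemma scan_upt_decreasing:
  assumes "g > 1" "\<forall>i. b i \<ge> 0" "i \<in> set (scan g b [0..<n] None)" "0 < i"
  shows "b i < b (i - 1)"
proof -
  obtain k where n: "n = Suc k" using assms(3) by (cases n) auto
  have "scan g b [0..<n] None = 0 # scan g b [1..<1 + k] (Some (b 0))"
    unfolding n by (simp add: upt_conv_Cons)
  moreover have "b 0 \<ge> 0" using assms(2) by blast
  then have "b 0 / g \<le> b (1 - 1)" using assms(1) by (simp add: divide_le_eq mult_le_cancel_left1)
  ultimately show ?thesis
    using scan_upt_Some_decreasing[OF assms(1,2), of 1 "b 0" k] assms by auto
qed

lemma scan_selects_last_zero:
  assumes "g > 0" "\<forall>x\<in>set xs. R x > 0" "R i = 0"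
  shows "i \<in> set (scan g R (xs @ [i]) None)"
proof -
  have "i \<in> set (scan g R (xs @ [i]) B)" if "case B of None \<Rightarrow> True | Some c \<Rightarrow> c > 0" for B
    using assms(2) that
  proof (induction xs arbitrary: B)
    case Nil
    then show ?case using assms(1,3) by (auto split: option.splits)
  qed (auto split: option.splits)
  then show ?thesis by simp
qed

lemma routing_tree_final_trees:
  "\<forall>i\<le>Kpar \<epsilon> G. routing_tree G (Tsel i) \<Longrightarrow> routing_tree G (final_trees \<epsilon> G Tsel j)"
  using final_trees_in_range[of \<epsilon> G Tsel j] by auto

lemma buy_cost_final_trees_le_Suc:
  assumes "valid_inst G" "\<epsilon> > 0" "\<forall>i\<le>Kpar \<epsilon> G. routing_tree G (Tsel i)" "i < Kpar \<epsilon> G"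
    and "rent_cost G (Mpar \<epsilon> (Suc i)) (final_trees \<epsilon> G Tsel (Suc i)) = 0"
  shows "buy_cost G (Mpar \<epsilon> i) (final_trees \<epsilon> G Tsel i)
    \<le> buy_cost G (Mpar \<epsilon> (Suc i)) (final_trees \<epsilon> G Tsel (Suc i))"
proof -
  let ?T = "final_trees \<epsilon> G Tsel"
  have rt: "routing_tree G (?T j)" for j using routing_tree_final_trees[OF assms(3)] .
  have M: "0 < Mpar \<epsilon> i" "Mpar \<epsilon> i \<le> Mpar \<epsilon> (Suc i)" unfolding Mpar_def using assms(2) by auto
  have "Mpar \<epsilon> i * buy_cost G (Mpar \<epsilon> i) (?T i) \<le> costA G (Mpar \<epsilon> i) (?T i)"
    using buy_cost_le_costA[OF assms(1) rt M(1)] .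
  also have "\<dots> \<le> costA G (Mpar \<epsilon> i) (?T (Suc i))"
    using costA_final_trees_le_Suc[OF assms(4)] .
  also have "\<dots> \<le> Mpar \<epsilon> i * buy_cost G (Mpar \<epsilon> (Suc i)) (?T (Suc i))"
    using costA_le_buy_cost_if_rent_cost_zero[OF assms(1) rt assms(5) M] .
  finally show ?thesis using M(1) by simp
qed

lemma zero_in_proc1_L:
  assumes "valid_inst G" "\<epsilon> > 0" "\<gamma> > 1" "\<delta> > 1" "\<forall>i\<le>Kpar \<epsilon> G. routing_tree G (Tsel i)"
  shows "0 \<in> set (proc1_L \<epsilon> \<gamma> \<delta> G Tsel)"
proof -
  define K where "K = Kpar \<epsilon> G"
  define T where "T = final_trees \<epsilon> G Tsel"
  define b where "b = (\<lambda>i. buy_cost G (Mpar \<epsilon> i) (T i))"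
  define R where "R = (\<lambda>i. rent_cost G (Mpar \<epsilon> i) (T i))"
  define xs where "xs = scan \<gamma> b [1..<Suc K] (Some (b 0))"
  have rt: "routing_tree G (T i)" for i unfolding T_def using routing_tree_final_trees[OF assms(5)] .
  have M: "0 < Mpar \<epsilon> i" for i unfolding Mpar_def using assms(2) by simp
  have LB: "scan \<gamma> b [0..<Suc K] None = 0 # xs" unfolding xs_def by (simp add: upt_conv_Cons)
  have "R x > 0" if x: "x \<in> set xs" for x
  proof -
    have "x \<in> {1..K}" using set_scan_subset x unfolding xs_def by fastforce
    then obtain j where j: "x = Suc j" "j < K" by (cases x) auto
    have "b x < b j"
      using scan_upt_decreasing[OF assms(3), of b x "Suc K"] buy_cost_nonneg[OF assms(1) rt] LB x j(1)
      unfolding b_def by simp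
    then have "R x \<noteq> 0"
      using buy_cost_final_trees_le_Suc[OF assms(1,2,5), of j] j unfolding R_def b_def T_def K_def by auto
    moreover have "R x \<ge> 0" unfolding R_def using rent_cost_nonneg[OF assms(1) rt M] .
    ultimately show ?thesis by simp
  qed
  moreover have "R 0 = 0" unfolding R_def Mpar_def by (simp add: rent_cost_one)
  moreover have "proc1_L \<epsilon> \<gamma> \<delta> G Tsel = scan \<delta> R (rev xs @ [0]) None"
    unfolding proc1_L_def Let_def R_def b_def T_def K_def[symmetric] LB[unfolded b_def T_def] by simp
  ultimately show ?thesis using scan_selects_last_zero[of \<delta> "rev xs" R 0] assms(4) by simp
qed

theorem lemma7:
  fixes G :: "('v, 'e) inst"
    and \<epsilon> \<alpha> \<beta> \<gamma> \<delta> lam :: real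
    and Tsel :: "nat \<Rightarrow> 'v set \<times> 'e set"
    and T :: "'v set \<times> 'e set"
  assumes "valid_inst G"
    and "\<epsilon> > 0" and "\<alpha> > 1" and "\<beta> \<ge> (\<alpha> + 1) / (\<alpha> - 1)" and "\<gamma> > 1" and "\<delta> > 1"
    and "lam \<ge> 1"
    and "\<forall>i \<le> Kpar \<epsilon> G. routing_tree G (Tsel i)
           \<and> (\<forall>T'. routing_tree G T' \<longrightarrow>
                 costA G (Mpar \<epsilon> i) (Tsel i) \<le> lam * costA G (Mpar \<epsilon> i) T')"
    and "proc2 \<alpha> \<beta> G (map (proc1_core \<epsilon> G Tsel) (proc1_L \<epsilon> \<gamma> \<delta> G Tsel)) ({groot G}, {}) T"
  shows "tree_in G T \<and> gDem G \<subseteq> fst T"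
proof -
  let ?Cs = "map (proc1_core \<epsilon> G Tsel) (proc1_L \<epsilon> \<gamma> \<delta> G Tsel)"
  have sel: "\<forall>i\<le>Kpar \<epsilon> G. routing_tree G (Tsel i)" using assms(8) by blast
  have rt: "routing_tree G (final_trees \<epsilon> G Tsel i)" for i using routing_tree_final_trees[OF sel] .
  have "groot G \<in> gV G" using assms(1) unfolding valid_inst_def by simp
  moreover have "\<forall>C\<in>set ?Cs. C \<subseteq> gV G"
    unfolding proc1_core_def using core_subset[OF assms(1) rt] by auto
  ultimately have "tree_in G T \<and> \<Union>(set ?Cs) \<subseteq> fst T"
    using proc2_tree_in[OF assms(9) tree_in_root] by auto
  moreover have "proc1_core \<epsilon> G Tsel 0 \<in> set ?Cs"
    using zero_in_proc1_L[OF assms(1,2,5,6) sel] by simp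
  moreover have "gDem G \<subseteq> proc1_core \<epsilon> G Tsel 0"
    unfolding proc1_core_def Mpar_def using demands_subset_core_one[OF assms(1) rt] by simp
  ultimately show ?thesis by blast
qed

end
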